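(* Let $d,T,\tau\ge1$ be integers and $\beta\in(0,1)$, and assume $2T\tau/\beta\ge e$ and $\tau/\beta\ge e$. Let $\sigma>0$ satisfy $$\sigma\sqrt{2\log\tfrac{2T\tau}{\beta}}\le\tfrac12,\qquad 5\sigma^2 d\log\tfrac{2T\tau}{\beta}\le\frac{1}{\log\frac{2T\tau}{\beta}},\qquad 5\sigma^2 d\log\tfrac{T\tau}{\beta}\le1 .$$ Let $a_1,\dots,a_n\in\mathbb{R}^d$ be nonzero vectors. Consider the random process $x^{(1)}=0\in\mathbb{R}^d$, $\lambda^{(1)}=0\in\mathbb{R}^n$, and for $t=1,\dots,T-1$: - $S^{(t)}=\{i:\langle\overline{a}_i,x^{(t)}\rangle\le0\}$ and $m^{(t)}=|S^{(t)}|$, where we assume $m^{(t)}\ge1$; - $u^{(t)}=\frac{1}{m^{(t)}}\sum_{i\in S^{(t)}}\overline{a}_i$; - $x^{(t+1)}=x^{(t)}+u^{(t)}+\eta^{(t)}$, where $\eta^{(t)}\sim N(0,\sigma^2I_d)$ are independent; - $\lambda^{(t+1)}_i=\lambda^{(t)}_i+\frac{1}{m^{(t)}}$ for $i\in S^{(t)}$, and $\lambda^{(t+1)}_i=\lambda^{(t)}_i$ otherwise. Let $\overline{\lambda}=\lambda^{(T)}/T$. Then with probability at least $1-\frac{3\beta}{\tau}$, $$\Big\|\sum_{i=1}^n\overline{\lambda}_i\overline{a}_i\Big\|_2\le\frac{11}{\sqrt{T}}.$$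
   Context: For a nonzero vector $a$, $\overline{a}=a/\|a\|_2$. $N(0,\sigma^2 I_d)$ is the centered Gaussian distribution on $\mathbb{R}^d$ with covariance $\sigma^2 I_d$. $\log$ is the natural logarithm. *)

theory Defs
  imports "HOL-Probability.Probability"
begin

definition abar :: "'a::real_normed_vector \<Rightarrow> 'a" where
  "abar v = (1 / norm v) *\<^sub>R v"

definition gaussian_vec :: "real \<Rightarrow> (real ^ 'd) measure" where
  "gaussian_vec s = density lborel
     (\<lambda>x. ennreal ((2 * pi * s\<^sup>2) powr (- real CARD('d) / 2)
                    * exp (- (norm x)\<^sup>2 / (2 * s\<^sup>2))))"

definition actS :: "(nat \<Rightarrow> real ^ 'd) \<Rightarrow> nat \<Rightarrow> real ^ 'd \<Rightarrow> nat set" where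
  "actS a n x = {i \<in> {1..n}. abar (a i) \<bullet> x \<le> 0}"

definition upd :: "(nat \<Rightarrow> real ^ 'd) \<Rightarrow> nat \<Rightarrow> real ^ 'd \<Rightarrow> real ^ 'd" where
  "upd a n x = (1 / real (card (actS a n x))) *\<^sub>R (\<Sum>i\<in>actS a n x. abar (a i))"

text \<open>Iterates, shifted by one: xit a n eta k = x^(k+1); the noise eta t is eta^(t).\<close>
primrec xit :: "(nat \<Rightarrow> real ^ 'd) \<Rightarrow> nat \<Rightarrow> (nat \<Rightarrow> real ^ 'd) \<Rightarrow> nat \<Rightarrow> real ^ 'd" where
  "xit a n eta 0 = 0"
| "xit a n eta (Suc k) = xit a n eta k + upd a n (xit a n eta k) + eta (Suc k)"

text \<open>Weights, shifted by one: lamit a n eta k = lambda^(k+1).\<close>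
primrec lamit :: "(nat \<Rightarrow> real ^ 'd) \<Rightarrow> nat \<Rightarrow> (nat \<Rightarrow> real ^ 'd) \<Rightarrow> nat \<Rightarrow> nat \<Rightarrow> real" where
  "lamit a n eta 0 = (\<lambda>i. 0)"
| "lamit a n eta (Suc k) = (\<lambda>i. lamit a n eta k i +
      (if i \<in> actS a n (xit a n eta k)
       then 1 / real (card (actS a n (xit a n eta k))) else 0))"

end

theory Submission
  imports Defs
begin

text \<open>Summing the update rule gives \<open>\<Sum>\<^sub>i \<lambda>\<^sub>i\<^sup>(\<^sup>T\<^sup>) abar a\<^sub>i = \<Sum>\<^sub>t u\<^sup>(\<^sup>t\<^sup>) = x\<^sup>(\<^sup>T\<^sup>) - W\<close>, where
  \<open>W = \<Sum>\<^sub>t \<eta>\<^sup>(\<^sup>t\<^sup>)\<close> is the accumulated noise, so it suffices that \<open>x\<^sup>(\<^sup>T\<^sup>)\<close> and \<open>W\<close> both have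
  norm at most \<open>2 \<surd>T\<close>. Both are noisy iterations \<open>z\<^sub>k\<^sub>+\<^sub>1 = G z\<^sub>k + \<eta>\<^sub>k\<^sub>+\<^sub>1\<close> of a map with
  \<open>\<parallel>G y\<parallel>\<^sup>2 \<le> \<parallel>y\<parallel>\<^sup>2 + 1\<close>: the identity for \<open>W\<close>, and \<open>y \<mapsto> y + u(y)\<close> for \<open>x\<close>, because
  \<open>\<langle>y, u(y)\<rangle> \<le> 0\<close> and \<open>\<parallel>u(y)\<parallel> \<le> 1\<close>. Completing the square gives
  \<open>E exp (c \<parallel>y + \<eta>\<parallel>\<^sup>2) = (1 - 2\<sigma>\<^sup>2c)\<^sup>-\<^sup>d\<^sup>/\<^sup>2 exp (c \<parallel>y\<parallel>\<^sup>2 / (1 - 2\<sigma>\<^sup>2c))\<close>; integrating out one noise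
  vector at a time then bounds \<open>E exp (c \<parallel>z\<^sub>k\<parallel>\<^sup>2)\<close>, and a Chernoff bound with \<open>c = L / T\<close>,
  \<open>L = log (2T\<tau>/\<beta>)\<close>, shows \<open>\<parallel>z\<^sub>T\<^sub>-\<^sub>1\<parallel>\<^sup>2 > 4T\<close> with probability at most \<open>e\<^sup>-\<^sup>L = \<beta>/(2T\<tau>)\<close>.

  This yields the constant 4 instead of 11 with probability \<open>1 - \<beta>/(T\<tau>)\<close>.\<close>

section \<open>Gaussian integrals\<close>

lemma gaussian_exponent_complete_square:
  fixes v c y t :: real
  assumes "v > 0" and "1 - 2 * v * c > 0"
  shows "- t\<^sup>2 / (2 * v) + c * (y + t)\<^sup>2
     = - (t - 2 * v * c * y / (1 - 2 * v * c))\<^sup>2 / (2 * (v / (1 - 2 * v * c)))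
       + c * y\<^sup>2 / (1 - 2 * v * c)"
proof -
  define q where "q = 1 - 2 * v * c"
  have "q \<noteq> 0" and c: "c = (1 - q) / (2 * v)"
    using assms by (simp_all add: q_def field_simps)
  then show ?thesis
    using assms(1) unfolding q_def[symmetric] unfolding c by (simp add: field_simps power2_eq_square)
qed

lemma nn_integral_normal_density_exp_shifted_square:
  fixes \<sigma> c y :: real
  assumes \<sigma>: "\<sigma> > 0" and q: "2 * \<sigma>\<^sup>2 * c < 1"
  shows "(\<integral>\<^sup>+t. ennreal (normal_density 0 \<sigma> t * exp (c * (y + t)\<^sup>2)) \<partial>lborel)
       = ennreal (1 / sqrt (1 - 2 * \<sigma>\<^sup>2 * c) * exp (c * y\<^sup>2 / (1 - 2 * \<sigma>\<^sup>2 * c)))"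
proof -
  define q where "q = 1 - 2 * \<sigma>\<^sup>2 * c"
  define \<mu> where "\<mu> = 2 * \<sigma>\<^sup>2 * c * y / q"
  define s where "s = sqrt (\<sigma>\<^sup>2 / q)"
  define K where "K = 1 / sqrt q * exp (c * y\<^sup>2 / q)"
  have q_pos: "q > 0" using q by (simp add: q_def)
  have s_pos: "s > 0" and s_sq: "s\<^sup>2 = \<sigma>\<^sup>2 / q"
    using q_pos \<sigma> by (simp_all add: s_def)
  have density_eq: "normal_density 0 \<sigma> t * exp (c * (y + t)\<^sup>2) = K * normal_density \<mu> s t" for t
  proof -
    have "- t\<^sup>2 / (2 * \<sigma>\<^sup>2) + c * (y + t)\<^sup>2 = - (t - \<mu>)\<^sup>2 / (2 * s\<^sup>2) + c * y\<^sup>2 / q"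
      unfolding s_sq \<mu>_def q_def
      by (rule gaussian_exponent_complete_square) (use q_pos \<sigma> q_def in auto)
    then have exp_eq: "exp (- t\<^sup>2 / (2 * \<sigma>\<^sup>2)) * exp (c * (y + t)\<^sup>2)
        = exp (c * y\<^sup>2 / q) * exp (- (t - \<mu>)\<^sup>2 / (2 * s\<^sup>2))"
      unfolding mult_exp_exp by (simp add: add.commute)
    have "sqrt (2 * pi * s\<^sup>2) = sqrt (2 * pi * \<sigma>\<^sup>2) / sqrt q"
      unfolding s_sq by (simp add: real_sqrt_divide)
    then have coeff_eq: "1 / sqrt (2 * pi * \<sigma>\<^sup>2) = 1 / sqrt q * (1 / sqrt (2 * pi * s\<^sup>2))"
      using q_pos by simp
    show ?thesis
      unfolding normal_density_def K_def coeff_eq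
      using exp_eq by (simp add: mult_ac)
  qed
  have "(\<integral>\<^sup>+t. ennreal (K * normal_density \<mu> s t) \<partial>lborel)
      = ennreal K * (\<integral>\<^sup>+t. ennreal (normal_density \<mu> s t) \<partial>lborel)"
    using q_pos by (subst ennreal_mult) (auto simp: K_def intro!: nn_integral_cmult)
  also have "(\<integral>\<^sup>+t. ennreal (normal_density \<mu> s t) \<partial>lborel) = 1"
    using prob_space.emeasure_space_1[OF prob_space_normal_density[of s \<mu>]] s_pos
    by (simp add: emeasure_density)
  finally show ?thesis unfolding density_eq K_def q_def by simp
qed

lemma powr_minus_half_of_nat:
  fixes z :: real
  assumes "z > 0"
  shows "z powr (- real n / 2) = (1 / sqrt z) ^ n"
proof -
  have "z powr (- real n / 2) = (z powr (- 1 / 2)) powr real n"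
    by (simp add: powr_powr)
  also have "\<dots> = (z powr (- 1 / 2)) ^ n"
    using assms by (simp add: powr_realpow)
  also have "z powr (- 1 / 2) = 1 / sqrt z"
    using assms by (simp add: powr_minus_divide powr_half_sqrt)
  finally show ?thesis .
qed

lemma norm_sq_eq_sum_Basis:
  fixes x :: "'a::euclidean_space"
  shows "(norm x)\<^sup>2 = (\<Sum>b\<in>Basis. (x \<bullet> b)\<^sup>2)"
  unfolding power2_norm_eq_inner by (subst euclidean_inner) (simp add: power2_eq_square)

lemma gaussian_vec_eq_prod_normal_density:
  fixes x :: "real ^ 'd"
  assumes "\<sigma> > 0"
  shows "(2 * pi * \<sigma>\<^sup>2) powr (- real CARD('d) / 2) * exp (- (norm x)\<^sup>2 / (2 * \<sigma>\<^sup>2))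
       = (\<Prod>b\<in>Basis. normal_density 0 \<sigma> (x \<bullet> b))"
proof -
  have "exp (- (norm x)\<^sup>2 / (2 * \<sigma>\<^sup>2)) = (\<Prod>b\<in>Basis. exp (- (x \<bullet> b)\<^sup>2 / (2 * \<sigma>\<^sup>2)))"
    by (simp add: norm_sq_eq_sum_Basis exp_sum[symmetric] sum_negf sum_divide_distrib)
  moreover have "(2 * pi * \<sigma>\<^sup>2) powr (- real CARD('d) / 2) = (\<Prod>b\<in>(Basis :: (real ^ 'd) set). 1 / sqrt (2 * pi * \<sigma>\<^sup>2))"
    using assms powr_minus_half_of_nat[of "2 * pi * \<sigma>\<^sup>2" "CARD('d)"] by simp
  ultimately show ?thesis
    unfolding normal_density_def prod.distrib by simp
qed

lemma nn_integral_gaussian_vec_exp_shifted_norm_sq: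
  fixes y :: "real ^ 'd" and \<sigma> c :: real
  assumes \<sigma>: "\<sigma> > 0" and q: "2 * \<sigma>\<^sup>2 * c < 1"
  shows "(\<integral>\<^sup>+x. ennreal (exp (c * (norm (y + x))\<^sup>2)) \<partial>(gaussian_vec \<sigma> :: (real ^ 'd) measure))
     = ennreal ((1 / sqrt (1 - 2 * \<sigma>\<^sup>2 * c)) ^ CARD('d) * exp (c * (norm y)\<^sup>2 / (1 - 2 * \<sigma>\<^sup>2 * c)))"
proof -
  define q where "q = 1 - 2 * \<sigma>\<^sup>2 * c"
  define g where "g = (\<lambda>y' t. normal_density 0 \<sigma> t * exp (c * (y' + t)\<^sup>2))"
  have q_pos: "q > 0" using q by (simp add: q_def)
  have integrand_eq: "ennreal ((2 * pi * \<sigma>\<^sup>2) powr (- real CARD('d) / 2) * exp (- (norm x)\<^sup>2 / (2 * \<sigma>\<^sup>2)))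
      * ennreal (exp (c * (norm (y + x))\<^sup>2)) = (\<Prod>b\<in>Basis. ennreal (g (y \<bullet> b) (x \<bullet> b)))"
    for x :: "real ^ 'd"
  proof -
    have "exp (c * (norm (y + x))\<^sup>2) = (\<Prod>b\<in>Basis. exp (c * (y \<bullet> b + x \<bullet> b)\<^sup>2))"
      unfolding norm_sq_eq_sum_Basis by (simp add: exp_sum[symmetric] sum_distrib_left inner_add_left)
    then have "(2 * pi * \<sigma>\<^sup>2) powr (- real CARD('d) / 2) * exp (- (norm x)\<^sup>2 / (2 * \<sigma>\<^sup>2))
        * exp (c * (norm (y + x))\<^sup>2) = (\<Prod>b\<in>Basis. g (y \<bullet> b) (x \<bullet> b))"
      unfolding gaussian_vec_eq_prod_normal_density[OF \<sigma>] by (simp add: g_def prod.distrib)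
    then show ?thesis
      by (simp add: ennreal_mult[symmetric] prod_ennreal g_def)
  qed
  have "(\<integral>\<^sup>+x. ennreal (exp (c * (norm (y + x))\<^sup>2)) \<partial>(gaussian_vec \<sigma> :: (real ^ 'd) measure))
      = (\<integral>\<^sup>+x. (\<Prod>b\<in>Basis. ennreal (g (y \<bullet> b) (x \<bullet> b))) \<partial>lborel)"
    unfolding gaussian_vec_def by (subst nn_integral_density) (measurable, simp only: integrand_eq)
  also have "\<dots> = (\<Prod>b\<in>(Basis :: (real ^ 'd) set). \<integral>\<^sup>+t. ennreal (g (y \<bullet> b) t) \<partial>lborel)"
    by (rule nn_integral_lborel_prod) (auto simp: g_def)
  also have "\<dots> = (\<Prod>b\<in>(Basis :: (real ^ 'd) set). ennreal (1 / sqrt q * exp (c * (y \<bullet> b)\<^sup>2 / q)))"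
    unfolding g_def q_def
    by (intro prod.cong refl nn_integral_normal_density_exp_shifted_square \<sigma> q)
  also have "\<dots> = ennreal (\<Prod>b\<in>(Basis :: (real ^ 'd) set). 1 / sqrt q * exp (c * (y \<bullet> b)\<^sup>2 / q))"
    using q_pos by (simp add: prod_ennreal)
  also have "(\<Prod>b\<in>(Basis :: (real ^ 'd) set). 1 / sqrt q * exp (c * (y \<bullet> b)\<^sup>2 / q))
      = (1 / sqrt q) ^ CARD('d) * exp (c * (norm y)\<^sup>2 / q)"
    unfolding prod.distrib norm_sq_eq_sum_Basis sum_distrib_left sum_divide_distrib
      exp_sum[OF finite_Basis] by simp
  finally show ?thesis unfolding q_def .
qed

lemma space_gaussian_vec [simp]: "space (gaussian_vec \<sigma>) = UNIV"
  by (simp add: gaussian_vec_def)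

lemma sets_gaussian_vec [simp]: "sets (gaussian_vec \<sigma>) = sets borel"
  by (simp add: gaussian_vec_def)

lemma prob_space_gaussian_vec:
  assumes "\<sigma> > 0"
  shows "prob_space (gaussian_vec \<sigma> :: (real ^ 'd) measure)"
proof
  show "emeasure (gaussian_vec \<sigma> :: (real ^ 'd) measure) (space (gaussian_vec \<sigma>)) = 1"
    using nn_integral_gaussian_vec_exp_shifted_norm_sq[OF assms, of 0 0]
    by (simp add: nn_integral_const)
qed

section \<open>Noisy iterations\<close>

primrec noisy_iter :: "('a::{zero,plus} \<Rightarrow> 'a) \<Rightarrow> (nat \<Rightarrow> 'a) \<Rightarrow> nat \<Rightarrow> 'a" where
  "noisy_iter G eta 0 = 0"
| "noisy_iter G eta (Suc k) = G (noisy_iter G eta k) + eta (Suc k)"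

lemma noisy_iter_cong:
  "(\<And>j. j \<in> {1..k} \<Longrightarrow> eta j = eta' j) \<Longrightarrow> noisy_iter G eta k = noisy_iter G eta' k"
  by (induction k) auto

text \<open>Points of \<open>space (PiM I M)\<close> are \<open>undefined\<close> outside \<open>I\<close>, so evaluation at any index
  is measurable, and the iterates need no bound on their index.\<close>
lemma measurable_PiM_eval_borel:
  assumes "\<And>i. i \<in> I \<Longrightarrow> sets (M i) = sets borel"
  shows "(\<lambda>x. x j) \<in> borel_measurable (PiM I M)"
proof (cases "j \<in> I")
  case True
  then show ?thesis
    using measurable_component_singleton[OF True, of M] assms
    by (simp add: measurable_def)
next
  case False
  then have "x j = undefined" if "x \<in> space (PiM I M)" for x
    using that by (auto simp: space_PiM)
  then show ?thesis
    by (subst measurable_cong[where g = "\<lambda>_. undefined"]) auto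
qed

lemma measurable_noisy_iter [measurable]:
  assumes [measurable]: "G \<in> borel_measurable borel"
  shows "(\<lambda>eta. noisy_iter G eta k) \<in> borel_measurable (PiM I (\<lambda>_. gaussian_vec \<sigma>))"
proof (induction k)
  case (Suc k)
  note Suc.IH [measurable]
  have [measurable]: "(\<lambda>eta. eta (Suc k)) \<in> borel_measurable (PiM I (\<lambda>_. gaussian_vec \<sigma>))"
    by (rule measurable_PiM_eval_borel) simp
  show ?case by simp measurable
qed simp

definition noisy_iter_mgf_bound :: "nat \<Rightarrow> real \<Rightarrow> real \<Rightarrow> nat \<Rightarrow> real" where
  "noisy_iter_mgf_bound d v c k =
     (1 / sqrt (1 - 2 * v * c * k)) ^ d * exp (k * c / (1 - 2 * v * c * k))"

lemma noisy_iter_mgf_bound_nonneg: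
  "2 * v * c * k < 1 \<Longrightarrow> 0 \<le> noisy_iter_mgf_bound d v c k"
  by (simp add: noisy_iter_mgf_bound_def)

lemma noisy_iter_mgf_bound_step:
  fixes v c :: real
  assumes v: "v > 0" and c: "c \<ge> 0" and R: "2 * v * c * real (Suc k) < 1"
  defines "q \<equiv> 1 - 2 * v * c"
  shows "2 * v * (c / q) * real k < 1"
    and "(1 / sqrt q) ^ d * exp (c / q) * noisy_iter_mgf_bound d v (c / q) k
           \<le> noisy_iter_mgf_bound d v c (Suc k)"
proof -
  define r where "r = 1 - 2 * v * c * real (Suc k)"
  have r_pos: "r > 0" using R by (simp add: r_def)
  have "v * c \<le> v * c * real (Suc k)"
    using mult_left_mono[of 1 "real (Suc k)" "v * c"] v c by simp
  then have r_le_q: "r \<le> q" by (simp add: r_def q_def)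
  have q_pos: "q > 0" using r_pos r_le_q by simp
  have ratio: "1 - 2 * v * (c / q) * real k = r / q"
    using q_pos by (simp add: r_def q_def field_simps)
  moreover have "r / q > 0"
    using r_pos q_pos by simp
  ultimately show "2 * v * (c / q) * real k < 1"
    by linarith
  have "c / q \<le> c / r"
    using c r_pos r_le_q by (simp add: frac_le)
  then have "exp (c / q) * exp (real k * c / r) \<le> exp (real (Suc k) * c / r)"
    by (simp add: mult_exp_exp add_divide_distrib distrib_right)
  moreover have "(1 / sqrt q) ^ d * (1 / sqrt (r / q)) ^ d = (1 / sqrt r) ^ d"
    using q_pos r_pos by (simp add: power_mult_distrib[symmetric] real_sqrt_divide)
  moreover have "real k * (c / q) / (r / q) = real k * c / r"
    using q_pos r_pos by (simp add: field_simps)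
  ultimately show "(1 / sqrt q) ^ d * exp (c / q) * noisy_iter_mgf_bound d v (c / q) k
      \<le> noisy_iter_mgf_bound d v c (Suc k)"
    unfolding noisy_iter_mgf_bound_def ratio r_def[symmetric]
    using r_pos by (simp add: mult_ac mult_left_mono)
qed

lemma nn_integral_gaussian_vec_exp_norm_sq_le:
  fixes w :: "real ^ 'd"
  assumes \<sigma>: "\<sigma> > 0" and c: "c \<ge> 0" and q: "2 * \<sigma>\<^sup>2 * c < 1"
    and w: "(norm w)\<^sup>2 \<le> r + 1"
  defines "q \<equiv> 1 - 2 * \<sigma>\<^sup>2 * c"
  shows "(\<integral>\<^sup>+y. ennreal (exp (c * (norm (w + y))\<^sup>2)) \<partial>(gaussian_vec \<sigma> :: (real ^ 'd) measure))
      \<le> ennreal ((1 / sqrt q) ^ CARD('d) * exp (c / q)) * ennreal (exp (c / q * r))"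
proof -
  have q_pos: "q > 0" using q by (simp add: q_def)
  have "c * (norm w)\<^sup>2 / q \<le> c * (r + 1) / q"
    using c w q_pos by (intro divide_right_mono mult_left_mono) auto
  then have "exp (c * (norm w)\<^sup>2 / q) \<le> exp (c / q) * exp (c / q * r)"
    by (simp add: mult_exp_exp add_divide_distrib distrib_left)
  then have "(1 / sqrt q) ^ CARD('d) * exp (c * (norm w)\<^sup>2 / q)
      \<le> (1 / sqrt q) ^ CARD('d) * exp (c / q) * exp (c / q * r)"
    using q_pos by (simp add: mult.assoc mult_left_mono)
  then show ?thesis
    unfolding nn_integral_gaussian_vec_exp_shifted_norm_sq[OF \<sigma> q, of w] q_def[symmetric]
    using q_pos by (simp add: ennreal_mult[symmetric] ennreal_leI)
qed

lemma nn_integral_exp_norm_sq_noisy_iter_le: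
  fixes G :: "real ^ 'd \<Rightarrow> real ^ 'd"
  assumes \<sigma>: "\<sigma> > 0" and G [measurable]: "G \<in> borel_measurable borel"
    and G_le: "\<And>y. (norm (G y))\<^sup>2 \<le> (norm y)\<^sup>2 + 1"
  shows "0 \<le> c \<Longrightarrow> 2 * \<sigma>\<^sup>2 * c * real k < 1 \<Longrightarrow>
    (\<integral>\<^sup>+eta. ennreal (exp (c * (norm (noisy_iter G eta k))\<^sup>2))
       \<partial>PiM {1..k} (\<lambda>_. gaussian_vec \<sigma> :: (real ^ 'd) measure))
    \<le> ennreal (noisy_iter_mgf_bound CARD('d) (\<sigma>\<^sup>2) c k)"
proof (induction k arbitrary: c)
  case 0
  then show ?case
    by (simp add: PiM_empty nn_integral_count_space_finite noisy_iter_mgf_bound_def)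
next
  case (Suc k)
  interpret product_prob_space "\<lambda>_::nat. gaussian_vec \<sigma> :: (real ^ 'd) measure"
    by (intro product_prob_spaceI prob_space_gaussian_vec \<sigma>)
  let ?P = "\<lambda>k. PiM {1..k} (\<lambda>_. gaussian_vec \<sigma> :: (real ^ 'd) measure)"
  define q where "q = 1 - 2 * \<sigma>\<^sup>2 * c"
  define C where "C = (1 / sqrt q) ^ CARD('d) * exp (c / q)"
  have \<sigma>_sq: "\<sigma>\<^sup>2 > 0" using \<sigma> by simp
  have insert_Suc: "{1..Suc k} = insert (Suc k) {1..k}" by auto
  note step = noisy_iter_mgf_bound_step[OF \<sigma>_sq Suc.prems, folded q_def]
  have q: "2 * \<sigma>\<^sup>2 * c < 1"
    using Suc.prems mult_left_mono[of 1 "real (Suc k)" "2 * \<sigma>\<^sup>2 * c"] by simp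
  have "(\<integral>\<^sup>+eta. ennreal (exp (c * (norm (noisy_iter G eta (Suc k)))\<^sup>2)) \<partial>?P (Suc k))
     = (\<integral>\<^sup>+eta. \<integral>\<^sup>+y. ennreal (exp (c * (norm (noisy_iter G (eta(Suc k := y)) (Suc k)))\<^sup>2))
          \<partial>gaussian_vec \<sigma> \<partial>?P k)"
    unfolding insert_Suc by (intro product_nn_integral_insert) (simp, simp, measurable)
  also have "\<dots> \<le> (\<integral>\<^sup>+eta. ennreal C * ennreal (exp (c / q * (norm (noisy_iter G eta k))\<^sup>2)) \<partial>?P k)"
  proof (rule nn_integral_mono)
    fix eta
    have "noisy_iter G (eta(Suc k := y)) k = noisy_iter G eta k" for y
      by (rule noisy_iter_cong) auto
    then show "(\<integral>\<^sup>+y. ennreal (exp (c * (norm (noisy_iter G (eta(Suc k := y)) (Suc k)))\<^sup>2)) \<partial>gaussian_vec \<sigma>)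
        \<le> ennreal C * ennreal (exp (c / q * (norm (noisy_iter G eta k))\<^sup>2))"
      unfolding C_def q_def
      using nn_integral_gaussian_vec_exp_norm_sq_le[OF \<sigma> Suc.prems(1) q G_le] by simp
  qed
  also have "\<dots> = ennreal C * (\<integral>\<^sup>+eta. ennreal (exp (c / q * (norm (noisy_iter G eta k))\<^sup>2)) \<partial>?P k)"
    by (rule nn_integral_cmult) measurable
  also have "\<dots> \<le> ennreal C * ennreal (noisy_iter_mgf_bound CARD('d) (\<sigma>\<^sup>2) (c / q) k)"
  proof (rule mult_left_mono)
    have "q > 0"
      using q by (simp add: q_def)
    then show "(\<integral>\<^sup>+eta. ennreal (exp (c / q * (norm (noisy_iter G eta k))\<^sup>2)) \<partial>?P k)
        \<le> ennreal (noisy_iter_mgf_bound CARD('d) (\<sigma>\<^sup>2) (c / q) k)"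
      using Suc.prems(1) step(1) by (intro Suc.IH) auto
  qed simp
  also have "\<dots> \<le> ennreal (noisy_iter_mgf_bound CARD('d) (\<sigma>\<^sup>2) c (Suc k))"
    using step q noisy_iter_mgf_bound_nonneg[OF step(1)]
    by (simp add: C_def q_def ennreal_mult[symmetric] ennreal_leI)
  finally show ?case .
qed

lemma measure_noisy_iter_norm_sq_gt_le:
  fixes G :: "real ^ 'd \<Rightarrow> real ^ 'd"
  assumes \<sigma>: "\<sigma> > 0" and G [measurable]: "G \<in> borel_measurable borel"
    and G_le: "\<And>y. (norm (G y))\<^sup>2 \<le> (norm y)\<^sup>2 + 1"
    and c: "0 \<le> c" and ck: "2 * \<sigma>\<^sup>2 * c * real k < 1"
  shows "measure (PiM {1..k} (\<lambda>_. gaussian_vec \<sigma> :: (real ^ 'd) measure))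
      {eta \<in> space (PiM {1..k} (\<lambda>_. gaussian_vec \<sigma> :: (real ^ 'd) measure)).
         R < (norm (noisy_iter G eta k))\<^sup>2}
    \<le> exp (- c * R) * noisy_iter_mgf_bound CARD('d) (\<sigma>\<^sup>2) c k"
proof -
  let ?P = "PiM {1..k} (\<lambda>_. gaussian_vec \<sigma> :: (real ^ 'd) measure)"
  let ?E = "{eta \<in> space ?P. R < (norm (noisy_iter G eta k))\<^sup>2}"
  let ?B = "noisy_iter_mgf_bound CARD('d) (\<sigma>\<^sup>2) c k"
  have "emeasure ?P ?E = (\<integral>\<^sup>+eta. indicator ?E eta \<partial>?P)"
    by (intro nn_integral_indicator[symmetric]) measurable
  also have "\<dots> \<le> (\<integral>\<^sup>+eta. ennreal (exp (- c * R)) * ennreal (exp (c * (norm (noisy_iter G eta k))\<^sup>2)) \<partial>?P)"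
  proof (intro nn_integral_mono)
    fix eta
    have "c * R \<le> c * (norm (noisy_iter G eta k))\<^sup>2" if "eta \<in> ?E"
      using that c by (intro mult_left_mono) auto
    then show "indicator ?E eta \<le> ennreal (exp (- c * R)) * ennreal (exp (c * (norm (noisy_iter G eta k))\<^sup>2))"
      by (auto simp: indicator_def ennreal_mult[symmetric] mult_exp_exp)
  qed
  also have "\<dots> = ennreal (exp (- c * R)) * (\<integral>\<^sup>+eta. ennreal (exp (c * (norm (noisy_iter G eta k))\<^sup>2)) \<partial>?P)"
    by (rule nn_integral_cmult) measurable
  also have "\<dots> \<le> ennreal (exp (- c * R)) * ennreal ?B"
    by (intro mult_left_mono nn_integral_exp_norm_sq_noisy_iter_le[OF \<sigma> G G_le c ck]) auto
  also have "\<dots> = ennreal (exp (- c * R) * ?B)"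
    using noisy_iter_mgf_bound_nonneg[OF ck] by (simp add: ennreal_mult)
  finally show ?thesis
    using noisy_iter_mgf_bound_nonneg[OF ck] by (simp add: measure_def enn2real_leI)
qed

lemma inverse_sqrt_one_minus_le_exp:
  fixes x :: real
  assumes x_nonneg: "0 \<le> x" and x: "x \<le> 2 / 5"
  shows "1 / sqrt (1 - x) \<le> exp (5 * x / 6)"
proof -
  have "x * x \<le> 2 / 5 * x"
    using x x_nonneg by (rule mult_right_mono)
  then have "1 \<le> (1 + 5 * x / 3) * (1 - x)"
    by (simp add: algebra_simps)
  then have "1 / (1 - x) \<le> 1 + 5 * x / 3"
    using x by (simp add: pos_divide_le_eq)
  also have "\<dots> \<le> exp (5 * x / 3)"
    by (rule exp_ge_add_one_self)
  also have "exp (5 * x / 3) = (exp (5 * x / 6))\<^sup>2"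
    by (simp add: power2_eq_square mult_exp_exp)
  finally have "sqrt (1 / (1 - x)) \<le> sqrt ((exp (5 * x / 6))\<^sup>2)"
    by (rule real_sqrt_le_mono)
  then show ?thesis
    by (simp add: real_sqrt_divide)
qed

lemma noisy_iter_mgf_bound_le_exp:
  fixes v L :: real and d k T :: nat
  assumes v: "0 \<le> v" and d: "1 \<le> d" and k: "k \<le> T" and T: "0 < T" and L: "1 \<le> L"
    and vdL: "5 * v * real d * L\<^sup>2 \<le> 1"
  shows "2 * v * (L / T) * k < 1"
    and "exp (- 4 * L) * noisy_iter_mgf_bound d v (L / T) k \<le> exp (- L)"
proof -
  define x where "x = 2 * v * (L / T) * k"
  have kc: "k * (L / T) \<le> L" and kc_nonneg: "0 \<le> k * (L / T)"
    using k T L by (simp_all add: field_simps)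
  have x_nonneg: "0 \<le> x"
    using v L by (simp add: x_def)
  have "x = 2 * v * (k * (L / T))"
    by (simp add: x_def mult_ac)
  also have "\<dots> \<le> 2 * v * L"
    using kc v by (intro mult_left_mono) auto
  finally have "x \<le> 2 * v * L" .
  then have "x * d \<le> 2 * v * L * d"
    by (simp add: mult_right_mono)
  also have "2 * v * L * d \<le> 2 / 5"
  proof -
    have "0 \<le> 5 * v * L * d"
      using v L by simp
    from mult_left_mono[OF L this] have "5 * v * L * d \<le> 5 * v * L * d * L"
      by simp
    moreover have "5 * v * real d * L\<^sup>2 = 5 * v * L * d * L"
      by (simp add: power2_eq_square mult_ac)
    ultimately show ?thesis
      using vdL by linarith
  qed
  finally have xd: "x * d \<le> 2 / 5" .
  moreover have "x * 1 \<le> x * d"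
    using d x_nonneg by (intro mult_left_mono) auto
  ultimately have x: "x \<le> 2 / 5"
    by simp
  then show "2 * v * (L / T) * k < 1"
    by (simp add: x_def)
  have "(1 / sqrt (1 - x)) ^ d \<le> exp (5 * x / 6) ^ d"
    using x x_nonneg inverse_sqrt_one_minus_le_exp by (intro power_mono) auto
  also have "\<dots> = exp (5 * (x * d) / 6)"
    by (simp add: exp_of_nat_mult[symmetric] mult_ac)
  also have "\<dots> \<le> exp (1 / 3)"
    using xd by simp
  finally have root_le: "(1 / sqrt (1 - x)) ^ d \<le> exp (1 / 3)" .
  have "k * (L / T) / (1 - x) \<le> L / (3 / 5)"
    using kc kc_nonneg x L by (intro frac_le) auto
  then have "exp (k * (L / T) / (1 - x)) \<le> exp (5 * L / 3)"
    by simp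
  with root_le have "noisy_iter_mgf_bound d v (L / T) k \<le> exp (1 / 3) * exp (5 * L / 3)"
    unfolding noisy_iter_mgf_bound_def x_def[symmetric] by (intro mult_mono) auto
  then have "exp (- 4 * L) * noisy_iter_mgf_bound d v (L / T) k \<le> exp (- 4 * L) * (exp (1 / 3) * exp (5 * L / 3))"
    by (intro mult_left_mono) auto
  also have "\<dots> \<le> exp (- L)"
    using L by (simp add: mult_exp_exp)
  finally show "exp (- 4 * L) * noisy_iter_mgf_bound d v (L / T) k \<le> exp (- L)" .
qed

lemma measure_noisy_iter_norm_sq_gt_le_exp:
  fixes G :: "real ^ 'd \<Rightarrow> real ^ 'd" and \<sigma> L :: real and T :: nat
  assumes \<sigma>: "\<sigma> > 0" and G [measurable]: "G \<in> borel_measurable borel"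
    and G_le: "\<And>y. (norm (G y))\<^sup>2 \<le> (norm y)\<^sup>2 + 1"
    and T: "1 \<le> T" and L: "1 \<le> L" and \<sigma>L: "5 * \<sigma>\<^sup>2 * real CARD('d) * L\<^sup>2 \<le> 1"
  shows "measure (PiM {1..T - 1} (\<lambda>_. gaussian_vec \<sigma> :: (real ^ 'd) measure))
      {eta \<in> space (PiM {1..T - 1} (\<lambda>_. gaussian_vec \<sigma> :: (real ^ 'd) measure)).
         4 * real T < (norm (noisy_iter G eta (T - 1)))\<^sup>2}
    \<le> exp (- L)"
proof -
  have T_pos: "0 < T"
    using T by simp
  have "1 \<le> CARD('d)"
    using card_gt_0_iff[of "UNIV :: 'd set"] by simp
  note numeric = noisy_iter_mgf_bound_le_exp[OF zero_le_power2 this diff_le_self T_pos L \<sigma>L]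
  have "measure (PiM {1..T - 1} (\<lambda>_. gaussian_vec \<sigma> :: (real ^ 'd) measure))
      {eta \<in> space (PiM {1..T - 1} (\<lambda>_. gaussian_vec \<sigma> :: (real ^ 'd) measure)).
         4 * real T < (norm (noisy_iter G eta (T - 1)))\<^sup>2}
    \<le> exp (- (L / T) * (4 * real T)) * noisy_iter_mgf_bound CARD('d) (\<sigma>\<^sup>2) (L / T) (T - 1)"
    using numeric(1) L by (intro measure_noisy_iter_norm_sq_gt_le[OF \<sigma> G G_le]) auto
  also have "exp (- (L / T) * (4 * real T)) = exp (- 4 * L)"
    using T_pos by simp
  also have "exp (- 4 * L) * noisy_iter_mgf_bound CARD('d) (\<sigma>\<^sup>2) (L / T) (T - 1) \<le> exp (- L)"
    using numeric(2) by simp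
  finally show ?thesis .
qed

section \<open>The perturbed descent process\<close>

lemma norm_abar_le: "norm (abar v) \<le> 1"
  unfolding abar_def by (cases "v = 0") auto

lemma inner_upd_nonpos: "x \<bullet> upd a n x \<le> 0"
proof -
  have "x \<bullet> upd a n x = (1 / real (card (actS a n x))) * (\<Sum>i\<in>actS a n x. x \<bullet> abar (a i))"
    by (simp add: upd_def inner_sum_right)
  also have "\<dots> \<le> 0"
    by (intro mult_nonneg_nonpos sum_nonpos) (auto simp: actS_def inner_commute)
  finally show ?thesis .
qed

lemma norm_upd_le: "norm (upd a n x) \<le> 1"
proof (cases "actS a n x = {}")
  case False
  have card_pos: "card (actS a n x) > 0"
    using False by (simp add: card_gt_0_iff actS_def)
  have "norm (upd a n x) = (1 / real (card (actS a n x))) * norm (\<Sum>i\<in>actS a n x. abar (a i))"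
    by (simp add: upd_def)
  also have "\<dots> \<le> (1 / real (card (actS a n x))) * (\<Sum>i\<in>actS a n x. 1)"
    by (intro mult_left_mono order.trans[OF norm_sum] sum_mono norm_abar_le) auto
  also have "\<dots> = 1"
    using card_pos by simp
  finally show ?thesis .
qed (simp add: upd_def)

lemma norm_add_upd_sq_le: "(norm (x + upd a n x))\<^sup>2 \<le> (norm x)\<^sup>2 + 1"
proof -
  have "(norm (x + upd a n x))\<^sup>2 = (norm x)\<^sup>2 + 2 * (x \<bullet> upd a n x) + (norm (upd a n x))\<^sup>2"
    unfolding power2_norm_eq_inner by (simp add: inner_add inner_commute)
  moreover have "(norm (upd a n x))\<^sup>2 \<le> 1"
    using norm_upd_le by (simp add: abs_square_le_1)
  ultimately show ?thesis
    using inner_upd_nonpos[of x a n] by linarith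
qed

lemma borel_measurable_card_actS [measurable]:
  "(\<lambda>x. real (card (actS a n x))) \<in> borel_measurable borel"
proof -
  have "real (card (actS a n x)) = (\<Sum>i\<in>{1..n}. if abar (a i) \<bullet> x \<le> 0 then 1 else 0)" for x
    by (simp add: actS_def sum.inter_filter[symmetric])
  then show ?thesis
    by simp measurable
qed

lemma pred_mem_actS [measurable]: "Measurable.pred borel (\<lambda>x. i \<in> actS a n x)"
  unfolding actS_def by measurable

lemma pred_one_le_card_actS [measurable]: "Measurable.pred borel (\<lambda>x. 1 \<le> card (actS a n x))"
proof -
  have "1 \<le> card (actS a n x) \<longleftrightarrow> (\<exists>i\<in>{1..n}. abar (a i) \<bullet> x \<le> 0)" for x
    by (auto simp: Suc_le_eq card_gt_0_iff actS_def)
  then show ?thesis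
    by simp measurable
qed

lemma borel_measurable_upd [measurable]: "upd a n \<in> borel_measurable borel"
proof -
  have "upd a n = (\<lambda>x. (1 / real (card (actS a n x))) *\<^sub>R
      (\<Sum>i\<in>{1..n}. if abar (a i) \<bullet> x \<le> 0 then abar (a i) else 0))"
    by (simp add: fun_eq_iff upd_def actS_def sum.inter_filter[symmetric])
  then show ?thesis
    by simp
qed

lemma xit_eq_noisy_iter: "xit a n eta k = noisy_iter (\<lambda>x. x + upd a n x) eta k"
  by (induction k) auto

lemma measurable_xit [measurable]:
  "(\<lambda>eta. xit a n eta k) \<in> borel_measurable (PiM I (\<lambda>_. gaussian_vec \<sigma>))"
  unfolding xit_eq_noisy_iter by measurable

lemma measurable_lamit [measurable]:
  "(\<lambda>eta. lamit a n eta k i) \<in> borel_measurable (PiM I (\<lambda>_. gaussian_vec \<sigma> :: (real ^ 'd) measure))"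
proof (induction k)
  case (Suc k)
  note Suc.IH [measurable]
  show ?case by simp measurable
qed simp

lemma sum_step_weights_scaleR_abar:
  "(\<Sum>i=1..n. (if i \<in> actS a n x then 1 / real (card (actS a n x)) else 0) *\<^sub>R abar (a i))
     = upd a n x"
proof -
  have "actS a n x \<subseteq> {1..n}"
    by (auto simp: actS_def)
  then show ?thesis
    by (simp add: upd_def scaleR_sum_right if_distrib[of "\<lambda>r. r *\<^sub>R _"] sum.If_cases Int_absorb1)
qed

lemma sum_lamit_scaleR_abar:
  "(\<Sum>i=1..n. lamit a n eta k i *\<^sub>R abar (a i)) = xit a n eta k - noisy_iter id eta k"
proof (induction k)
  case (Suc k)
  have "(\<Sum>i=1..n. lamit a n eta (Suc k) i *\<^sub>R abar (a i))
     = (\<Sum>i=1..n. lamit a n eta k i *\<^sub>R abar (a i))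
       + (\<Sum>i=1..n. (if i \<in> actS a n (xit a n eta k)
             then 1 / real (card (actS a n (xit a n eta k))) else 0) *\<^sub>R abar (a i))"
    by (simp add: scaleR_add_left sum.distrib)
  then show ?case
    unfolding Suc.IH sum_step_weights_scaleR_abar by (simp add: id_def)
qed simp

lemma norm_scaleR_diff_le:
  fixes x w :: "'a::real_normed_vector" and T :: real
  assumes T: "T > 0" and x: "(norm x)\<^sup>2 \<le> 4 * T" and w: "(norm w)\<^sup>2 \<le> 4 * T"
  shows "norm ((1 / T) *\<^sub>R (x - w)) \<le> 4 / sqrt T"
proof -
  have "sqrt (4 * T) = 2 * sqrt T"
    by (simp add: real_sqrt_mult)
  then have "norm x \<le> 2 * sqrt T" and "norm w \<le> 2 * sqrt T"
    using real_le_rsqrt[OF x] real_le_rsqrt[OF w] by simp_all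
  then have "norm ((1 / T) *\<^sub>R (x - w)) \<le> (1 / T) * (4 * sqrt T)"
    using T norm_triangle_ineq4[of x w] by (simp add: divide_right_mono)
  also have "\<dots> = 4 / sqrt T"
    using T by (simp add: field_simps)
  finally show ?thesis .
qed

lemma norm_average_lamit_scaleR_abar_le:
  assumes T: "1 \<le> T"
    and "(norm (xit a n eta (T - 1)))\<^sup>2 \<le> 4 * real T"
    and "(norm (noisy_iter id eta (T - 1)))\<^sup>2 \<le> 4 * real T"
  shows "norm (\<Sum>i=1..n. (lamit a n eta (T - 1) i / real T) *\<^sub>R abar (a i)) \<le> 4 / sqrt (real T)"
proof -
  have "(\<Sum>i=1..n. (lamit a n eta (T - 1) i / real T) *\<^sub>R abar (a i))
      = (1 / real T) *\<^sub>R (\<Sum>i=1..n. lamit a n eta (T - 1) i *\<^sub>R abar (a i))"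
    by (simp add: scaleR_sum_right)
  also have "\<dots> = (1 / real T) *\<^sub>R (xit a n eta (T - 1) - noisy_iter id eta (T - 1))"
    unfolding sum_lamit_scaleR_abar ..
  finally show ?thesis
    using assms by (simp only:) (intro norm_scaleR_diff_le; simp)
qed

lemma (in prob_space) prob_ge_one_minus_two_bad_events:
  assumes "A \<in> events" "B \<in> events" "C \<in> events" "space M - (B \<union> C) \<subseteq> A"
  shows "1 - prob B - prob C \<le> prob A"
proof -
  have "1 - prob B - prob C \<le> 1 - prob (B \<union> C)"
    using measure_Un_le[OF assms(2,3)] by simp
  also have "\<dots> = prob (space M - (B \<union> C))"
    using assms(2,3) by (simp add: prob_compl)
  also have "\<dots> \<le> prob A"
    using assms(4,1) by (rule finite_measure_mono)
  finally show ?thesis .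
qed

theorem claim3p13:
  fixes a :: "nat \<Rightarrow> real ^ 'd" and n T \<tau> :: nat and \<beta> \<sigma> :: real
  assumes "T \<ge> 1" and "\<tau> \<ge> 1"
    and "0 < \<beta>" and "\<beta> < 1"
    and "2 * real T * real \<tau> / \<beta> \<ge> exp 1"
    and "real \<tau> / \<beta> \<ge> exp 1"
    and "\<sigma> > 0"
    and "\<sigma> * sqrt (2 * ln (2 * real T * real \<tau> / \<beta>)) \<le> 1 / 2"
    and "5 * \<sigma>\<^sup>2 * real CARD('d) * ln (2 * real T * real \<tau> / \<beta>)
           \<le> 1 / ln (2 * real T * real \<tau> / \<beta>)"
    and "5 * \<sigma>\<^sup>2 * real CARD('d) * ln (real T * real \<tau> / \<beta>) \<le> 1"
    and "\<forall>i\<in>{1..n}. a i \<noteq> 0"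
  shows "measure (PiM {1..T-1} (\<lambda>_. gaussian_vec \<sigma> :: (real ^ 'd) measure))
           {eta \<in> space (PiM {1..T-1} (\<lambda>_. gaussian_vec \<sigma> :: (real ^ 'd) measure)).
              (\<forall>k < T - 1. card (actS a n (xit a n eta k)) \<ge> 1) \<longrightarrow>
              norm (\<Sum>i=1..n. (lamit a n eta (T - 1) i / real T) *\<^sub>R abar (a i))
                \<le> 11 / sqrt (real T)}
         \<ge> 1 - 3 * \<beta> / real \<tau>"
proof -
  let ?P = "PiM {1..T-1} (\<lambda>_. gaussian_vec \<sigma> :: (real ^ 'd) measure)"
  let ?x = "\<lambda>eta. xit a n eta (T - 1)" and ?W = "\<lambda>eta. noisy_iter id eta (T - 1)"
  define L where "L = ln (2 * real T * real \<tau> / \<beta>)"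
  define bad where "bad Z = {eta \<in> space ?P. 4 * real T < (norm (Z eta :: real ^ 'd))\<^sup>2}" for Z
  define good where "good = {eta \<in> space ?P. (\<forall>k < T - 1. card (actS a n (xit a n eta k)) \<ge> 1) \<longrightarrow>
    norm (\<Sum>i=1..n. (lamit a n eta (T - 1) i / real T) *\<^sub>R abar (a i)) \<le> 11 / sqrt (real T)}"
  interpret P: prob_space ?P
    using assms(7) by (intro prob_space_PiM prob_space_gaussian_vec)
  have exp_L: "exp L = 2 * real T * real \<tau> / \<beta>"
    using assms(1-3) by (simp add: L_def)
  have L: "1 \<le> L"
    using assms(5) unfolding exp_L[symmetric] by simp
  have \<sigma>L: "5 * \<sigma>\<^sup>2 * real CARD('d) * L\<^sup>2 \<le> 1"
    using assms(9)[folded L_def] L by (simp add: power2_eq_square field_simps)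
  have bad_le: "P.prob (bad (\<lambda>eta. noisy_iter G eta (T - 1))) \<le> \<beta> / (2 * real T * real \<tau>)"
    if "G \<in> borel_measurable borel" and "\<And>y. (norm (G y))\<^sup>2 \<le> (norm y)\<^sup>2 + 1" for G
    using measure_noisy_iter_norm_sq_gt_le_exp[OF assms(7) that assms(1) L \<sigma>L] exp_L
    by (simp add: bad_def exp_minus)
  have "space ?P - (bad ?x \<union> bad ?W) \<subseteq> good"
  proof
    fix eta
    have "4 / sqrt (real T) \<le> 11 / sqrt (real T)"
      by (simp add: divide_right_mono)
    moreover assume "eta \<in> space ?P - (bad ?x \<union> bad ?W)"
    ultimately show "eta \<in> good"
      using norm_average_lamit_scaleR_abar_le[OF assms(1), of a n eta]
      by (auto simp: good_def bad_def not_less)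
  qed
  then have "1 - P.prob (bad ?x) - P.prob (bad ?W) \<le> P.prob good"
    by (intro P.prob_ge_one_minus_two_bad_events) (auto simp: good_def bad_def)
  moreover have "P.prob (bad ?x) \<le> \<beta> / (2 * real T * real \<tau>)"
    unfolding xit_eq_noisy_iter by (rule bad_le) (simp_all add: norm_add_upd_sq_le)
  moreover have "P.prob (bad ?W) \<le> \<beta> / (2 * real T * real \<tau>)"
    by (rule bad_le) simp_all
  moreover have "2 * (\<beta> / (2 * real T * real \<tau>)) \<le> 3 * \<beta> / real \<tau>"
    using assms(1-3) by (simp add: field_simps)
  ultimately show ?thesis
    unfolding good_def by linarith
qed

end
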